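(* Let $\lambda_1\ge\lambda_2\ge\dots>0$ with $\lambda_m\to0$, and for $\delta>0$, $d\in\mathbb N$ let $i_d(\delta^2)=\min\{i\in\mathbb N:\lambda_i\lambda_{i+1}\cdots\lambda_{i+d-1}\le\delta^2\}$. Let $n^{\rm ent}(\delta,1)=\#\{m\in\mathbb N:\lambda_m>\delta^2\}$ and $n^{\rm asy}(\epsilon,d)=\#\{k\in\mathbb N^d:k_1<k_2<\dots<k_d,\ \prod_{l=1}^d\lambda_{k_l}>\epsilon^2\}$. Then for every $\epsilon>0$, $n^{\rm asy}(\epsilon,1)=n^{\rm ent}(\epsilon,1)$, and for $d\ge2$ $$n^{\rm asy}(\epsilon,d)=\sum_{l_1=2}^{i_d(\epsilon^2)}\ \sum_{l_2=l_1+1}^{i_{d-1}(\epsilon^2/\lambda_{l_1-1})}\cdots\sum_{l_{d-1}=l_{d-2}+1}^{i_2(\epsilon^2/[\lambda_{l_1-1}\cdots\lambda_{l_{d-2}-1}])}\Big[n^{\rm ent}\big(\epsilon/\sqrt{\lambda_{l_1-1}\cdots\lambda_{l_{d-1}-1}},1\big)-l_{d-1}+1\Big],$$ with empty sums equal to zero.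
   Context: Here $\lambda=(\lambda_m)$ are the squared singular values of a compact linear operator $S_1:H_1\to G_1$, and $n^{\rm asy}(\epsilon,d)$ is the information complexity (absolute error, worst case) of $S_1^{\otimes d}$ restricted to the fully antisymmetric subspace of $H_1^{\otimes d}$ (i.e. $I_d=\{1,\dots,d\}$), and $n^{\rm ent}(\delta,1)$ that of $S_1$ itself. *)

theory Defs
  imports Complex_Main
begin

text \<open>Sequences lam are indexed from 1 (the value lam 0 is irrelevant).\<close>

definition i_idx :: "(nat \<Rightarrow> real) \<Rightarrow> nat \<Rightarrow> real \<Rightarrow> nat" where
  "i_idx lam d x = (LEAST i. 1 \<le> i \<and> (\<Prod>j\<in>{i..<i+d}. lam j) \<le> x)"

definition n_ent :: "(nat \<Rightarrow> real) \<Rightarrow> real \<Rightarrow> nat" where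
  "n_ent lam \<delta> = card {m. 1 \<le> m \<and> lam m > \<delta>\<^sup>2}"

definition n_asy :: "(nat \<Rightarrow> real) \<Rightarrow> real \<Rightarrow> nat \<Rightarrow> nat" where
  "n_asy lam \<epsilon> d = card {ks. length ks = d \<and> sorted_wrt (<) ks \<and> (\<forall>k\<in>set ks. 1 \<le> k)
        \<and> prod_list (map lam ks) > \<epsilon>\<^sup>2}"

text \<open>Nested sum: r = number of remaining summation indices, prev = previous index
  (l_0 = 1), p = product lam(l_1 - 1) ... lam(l_t - 1) accumulated so far.\<close>
fun nest :: "(nat \<Rightarrow> real) \<Rightarrow> real \<Rightarrow> nat \<Rightarrow> nat \<Rightarrow> real \<Rightarrow> int" where
  "nest lam \<epsilon> 0 prev p = int (n_ent lam (\<epsilon> / sqrt p)) - int prev + 1"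
| "nest lam \<epsilon> (Suc r) prev p =
     (\<Sum>l\<in>{prev+1 .. i_idx lam (Suc (Suc r)) (\<epsilon>\<^sup>2 / p)}. nest lam \<epsilon> r l (p * lam (l - 1)))"

end

theory Submission
  imports Defs
begin

(* Let strict_lists lam a n x be the strictly increasing lists of
   n indices, all \<ge> a, whose lam-product exceeds x; n_asy lam \<epsilon> d counts
   strict_lists lam 1 d \<epsilon>\<^sup>2.  Splitting off the first entry l - 1 leaves a list
   in strict_lists lam l (n-1) (x / lam (l-1)).  As lam is antitone, a list
   starting at k has product at most the block product lam k \<cdots> lam (k+n-1), so
   only first entries below i_idx lam n x occur: the range of the outer sum of
   nest.  With one entry left, the indices m \<ge> l with lam m > x number
   n_ent minus (l - 1), since minimality of i_idx gives lam m > x for m < l. *)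

definition block_prod :: "(nat \<Rightarrow> real) \<Rightarrow> nat \<Rightarrow> nat \<Rightarrow> real" where
  "block_prod lam a n = (\<Prod>j\<in>{a..<a+n}. lam j)"

definition strict_lists :: "(nat \<Rightarrow> real) \<Rightarrow> nat \<Rightarrow> nat \<Rightarrow> real \<Rightarrow> nat list set" where
  "strict_lists lam a n x = {ks. length ks = n \<and> sorted_wrt (<) ks \<and> (\<forall>k\<in>set ks. a \<le> k)
        \<and> prod_list (map lam ks) > x}"

lemma block_prod_Suc: "block_prod lam a (Suc n) = lam a * block_prod lam (Suc a) n"
  unfolding block_prod_def by (subst prod.atLeast_Suc_lessThan) auto

lemma block_prod_Suc_right: "block_prod lam a (Suc n) = block_prod lam a n * lam (a + n)"
  unfolding block_prod_def by (simp add: prod.atLeastLessThan_Suc)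

lemma i_idx_block_prod: "i_idx lam d x = (LEAST i. 1 \<le> i \<and> block_prod lam i d \<le> x)"
  unfolding i_idx_def block_prod_def by simp

lemma n_asy_strict_lists: "n_asy lam \<epsilon> d = card (strict_lists lam 1 d (\<epsilon>\<^sup>2))"
  unfolding n_asy_def strict_lists_def by simp

lemma strict_lists_one: "strict_lists lam a 1 x = (\<lambda>k. [k]) ` {k. a \<le> k \<and> lam k > x}"
  unfolding strict_lists_def by (auto simp: length_Suc_conv)

context
  fixes lam :: "nat \<Rightarrow> real"
  assumes mono: "\<And>m. 1 \<le> m \<Longrightarrow> lam (Suc m) \<le> lam m"
    and pos: "\<And>m. 1 \<le> m \<Longrightarrow> lam m > 0"
begin

lemma lam_antitone:
  assumes "1 \<le> m" "m \<le> n" shows "lam n \<le> lam m"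
  using assms(2)
proof (induction n rule: dec_induct)
  case (step n) then show ?case using mono[of n] assms(1) by simp
qed simp

lemma block_prod_pos: "1 \<le> a \<Longrightarrow> block_prod lam a n > 0"
  unfolding block_prod_def by (rule prod_pos) (use pos in auto)

lemma block_prod_antitone: "1 \<le> a \<Longrightarrow> a \<le> b \<Longrightarrow> block_prod lam b n \<le> block_prod lam a n"
proof (induction n)
  case 0 then show ?case by (simp add: block_prod_def)
next
  case (Suc n)
  have "block_prod lam b n * lam (b + n) \<le> block_prod lam a n * lam (a + n)"
    using Suc lam_antitone[of "a+n" "b+n"] block_prod_pos[of b n] pos[of "b+n"]
    by (intro mult_mono) auto
  then show ?case by (simp add: block_prod_Suc_right)
qed

text \<open>A strictly increasing list with entries \<open>\<ge> a\<close> has product at most the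
  block product starting at \<open>a\<close>: its \<open>i\<close>-th entry is at least \<open>a + i\<close>.\<close>
lemma prod_list_le_block_prod:
  "sorted_wrt (<) ks \<Longrightarrow> \<forall>k\<in>set ks. a \<le> k \<Longrightarrow> 1 \<le> a
   \<Longrightarrow> prod_list (map lam ks) \<le> block_prod lam a (length ks)"
proof (induction ks arbitrary: a)
  case Nil then show ?case by (simp add: block_prod_def)
next
  case (Cons k ks)
  have "\<forall>j\<in>set ks. Suc a \<le> j" using Cons.prems by auto
  then have "prod_list (map lam ks) \<le> block_prod lam (Suc a) (length ks)"
    using Cons by auto
  moreover have "prod_list (map lam ks) \<ge> 0"
    using Cons.prems pos by (intro prod_list_nonneg) (force intro: less_imp_le)
  moreover have "lam k \<le> lam a" "lam k \<ge> 0"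
    using Cons.prems lam_antitone pos[of k] by auto
  ultimately have "lam k * prod_list (map lam ks) \<le> lam a * block_prod lam (Suc a) (length ks)"
    using block_prod_pos[of "Suc a" "length ks"] by (intro mult_mono) auto
  then show ?case by (simp add: block_prod_Suc)
qed

lemma strict_lists_Cons_decomp:
  assumes a: "1 \<le> a" and I: "1 \<le> I" "block_prod lam I (Suc n) \<le> x"
  shows "strict_lists lam a (Suc n) x
       = (\<Union>l\<in>{a+1..I}. Cons (l - 1) ` strict_lists lam l n (x / lam (l - 1)))"
proof (rule set_eqI, rule iffI)
  fix ks assume ks: "ks \<in> strict_lists lam a (Suc n) x"
  then obtain k ks' where kk: "ks = k # ks'" "length ks' = n"
    unfolding strict_lists_def by (auto simp: length_Suc_conv)
  have ak: "a \<le> k" and pr: "lam k * prod_list (map lam ks') > x"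
    using ks kk unfolding strict_lists_def by auto
  have "k < I"
  proof (rule ccontr)
    assume "\<not> k < I"
    then have "block_prod lam k (Suc n) \<le> x"
      using block_prod_antitone[of I k] I by (meson not_less order_trans)
    moreover have "prod_list (map lam ks) \<le> block_prod lam k (length ks)"
      using ks kk ak a unfolding strict_lists_def by (intro prod_list_le_block_prod) auto
    ultimately show False using pr kk by simp
  qed
  moreover have "lam k > 0" using pos ak a by auto
  then have "ks' \<in> strict_lists lam (Suc k) n (x / lam k)"
    using ks kk pr unfolding strict_lists_def by (auto simp: field_simps Suc_le_eq)
  ultimately show "ks \<in> (\<Union>l\<in>{a+1..I}. Cons (l - 1) ` strict_lists lam l n (x / lam (l - 1)))"
    using kk ak by (intro UN_I[of "Suc k"]) auto
next
  fix ks assume "ks \<in> (\<Union>l\<in>{a+1..I}. Cons (l - 1) ` strict_lists lam l n (x / lam (l - 1)))"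
  then obtain l ks' where l: "l \<in> {a+1..I}" "ks' \<in> strict_lists lam l n (x / lam (l - 1))"
      "ks = (l - 1) # ks'" by auto
  have "lam (l - 1) > 0" using pos l a by auto
  then have "lam (l - 1) * prod_list (map lam ks') > x"
    using l(2) unfolding strict_lists_def by (auto simp: field_simps)
  then show "ks \<in> strict_lists lam a (Suc n) x"
    using l unfolding strict_lists_def by force
qed

context
  assumes lim: "lam \<longlonglongrightarrow> 0"
begin

lemma eventually_below: "x > 0 \<Longrightarrow> \<exists>N. \<forall>n\<ge>N. lam n < x"
  using order_tendstoD(2)[OF lim] by (auto simp: eventually_sequentially)

lemma finite_above: "x > 0 \<Longrightarrow> finite {k. lam k > x}"
proof -
  assume "x > 0"
  then obtain N where "\<forall>n\<ge>N. lam n < x" using eventually_below by blast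
  then have "{k. lam k > x} \<subseteq> {..<N}" by (auto simp: not_less[symmetric])
  then show ?thesis using finite_subset by blast
qed

text \<open>Block products eventually drop below any positive threshold, so the
  minimum defining \<open>i_idx\<close> exists.\<close>
lemma block_prod_eventually_le: "x > 0 \<Longrightarrow> \<exists>i. 1 \<le> i \<and> block_prod lam i (Suc n) \<le> x"
proof -
  assume x: "x > 0"
  obtain N where N: "\<forall>n\<ge>N. lam n < min 1 x" using eventually_below[of "min 1 x"] x by auto
  define i where "i = max 1 N"
  have "block_prod lam i (Suc m) < x" for m
  proof (induction m)
    case 0 then show ?case using N by (simp add: block_prod_def i_def)
  next
    case (Suc m)
    have "lam (i + Suc m) < 1" using N by (simp add: i_def)
    moreover have "block_prod lam i (Suc m) > 0" using block_prod_pos by (simp add: i_def)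
    ultimately have "block_prod lam i (Suc m) * lam (i + Suc m) \<le> block_prod lam i (Suc m)"
      by (simp add: mult_left_le)
    then show ?case using Suc by (simp add: block_prod_Suc_right[of lam i "Suc m"])
  qed
  then show ?thesis by (intro exI[of _ i]) (auto simp: i_def less_imp_le)
qed

lemma i_idx_props:
  assumes "x > 0"
  shows "1 \<le> i_idx lam (Suc n) x" "block_prod lam (i_idx lam (Suc n) x) (Suc n) \<le> x"
    and "\<And>k. 1 \<le> k \<Longrightarrow> k < i_idx lam (Suc n) x \<Longrightarrow> block_prod lam k (Suc n) > x"
proof -
  have "1 \<le> i_idx lam (Suc n) x \<and> block_prod lam (i_idx lam (Suc n) x) (Suc n) \<le> x"
    unfolding i_idx_block_prod using block_prod_eventually_le[OF assms] by (rule LeastI_ex)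
  then show "1 \<le> i_idx lam (Suc n) x" "block_prod lam (i_idx lam (Suc n) x) (Suc n) \<le> x"
    by auto
  show "block_prod lam k (Suc n) > x" if "1 \<le> k" "k < i_idx lam (Suc n) x" for k
    using not_less_Least[of k "\<lambda>i. 1 \<le> i \<and> block_prod lam i (Suc n) \<le> x"] that
    unfolding i_idx_block_prod by auto
qed

lemma card_strict_lists_one:
  assumes a: "1 \<le> a" and x: "x > 0" and start: "a = 1 \<or> lam a > x"
  shows "finite (strict_lists lam a 1 x)"
    and "card {m. 1 \<le> m \<and> lam m > x} = (a - 1) + card (strict_lists lam a 1 x)"
proof -
  define B where "B = {k. a \<le> k \<and> lam k > x}"
  have finB: "finite B" using finite_above[OF x] unfolding B_def by (rule rev_finite_subset) auto
  have card: "card (strict_lists lam a 1 x) = card B"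
    unfolding strict_lists_one B_def by (rule card_image) (auto simp: inj_on_def)
  show "finite (strict_lists lam a 1 x)" using finB unfolding strict_lists_one B_def by simp
  have "lam m > x" if "1 \<le> m" "m < a" for m
    using start that lam_antitone[of m a] by auto
  then have "{m. 1 \<le> m \<and> lam m > x} = {1..<a} \<union> B" unfolding B_def using a by auto
  moreover have "card ({1..<a} \<union> B) = card {1..<a} + card B"
    using finB by (intro card_Un_disjoint) (auto simp: B_def)
  ultimately show "card {m. 1 \<le> m \<and> lam m > x} = (a - 1) + card (strict_lists lam a 1 x)"
    using card by simp
qed

text \<open>The side condition on \<open>a\<close> is the
  invariant that the minimality of \<open>i_idx\<close> supplies to the recursive calls.\<close>
lemma card_strict_lists_nest:
  assumes eps: "\<epsilon> > 0"
  shows "1 \<le> a \<Longrightarrow> p > 0 \<Longrightarrow> a = 1 \<or> block_prod lam a (Suc r) > \<epsilon>\<^sup>2 / p \<Longrightarrow>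
    finite (strict_lists lam a (Suc r) (\<epsilon>\<^sup>2 / p)) \<and>
    int (card (strict_lists lam a (Suc r) (\<epsilon>\<^sup>2 / p))) = nest lam \<epsilon> r a p"
proof (induction r arbitrary: a p)
  case 0
  have x: "\<epsilon>\<^sup>2 / p > 0" and sq: "(\<epsilon> / sqrt p)\<^sup>2 = \<epsilon>\<^sup>2 / p"
    using eps 0 by (simp_all add: power_divide)
  have "a = 1 \<or> lam a > \<epsilon>\<^sup>2 / p" using 0 by (simp add: block_prod_def)
  from card_strict_lists_one[OF \<open>1 \<le> a\<close> x this] show ?case
    using 0 by (simp add: n_ent_def sq)
next
  case (Suc r)
  define x where "x = \<epsilon>\<^sup>2 / p"
  define I where "I = i_idx lam (Suc (Suc r)) x"
  define F where "F l = strict_lists lam l (Suc r) (\<epsilon>\<^sup>2 / (p * lam (l - 1)))" for l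
  have x: "x > 0" using eps Suc by (simp add: x_def)
  have IH: "finite (F l) \<and> int (card (F l)) = nest lam \<epsilon> r l (p * lam (l - 1))"
    if l: "l \<in> {a+1..I}" for l
  proof -
    have l1: "1 \<le> l - 1" "l - 1 < I" using l Suc.prems by auto
    have lp: "lam (l - 1) > 0" using pos l1 by auto
    have "lam (l - 1) * block_prod lam l (Suc r) > x"
      using i_idx_props(3)[OF x, of "l - 1" "Suc r"] l1 l1 by (simp add: I_def block_prod_Suc)
    then have "block_prod lam l (Suc r) > \<epsilon>\<^sup>2 / (p * lam (l - 1))"
      using lp Suc.prems by (simp add: x_def field_simps)
    then show ?thesis unfolding F_def
      using Suc.IH[of l "p * lam (l - 1)"] l Suc.prems lp by auto
  qed
  have decomp: "strict_lists lam a (Suc (Suc r)) x = (\<Union>l\<in>{a+1..I}. Cons (l - 1) ` F l)"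
    using strict_lists_Cons_decomp[OF \<open>1 \<le> a\<close> i_idx_props(1,2)[OF x]]
    by (simp add: I_def F_def x_def divide_divide_eq_left)
  have "int (card (strict_lists lam a (Suc (Suc r)) x))
      = (\<Sum>l\<in>{a+1..I}. int (card (Cons (l - 1) ` F l)))"
    unfolding decomp using IH by (subst card_UN_disjoint) auto
  also have "\<dots> = (\<Sum>l\<in>{a+1..I}. nest lam \<epsilon> r l (p * lam (l - 1)))"
    using IH by (intro sum.cong refl) (simp add: card_image)
  moreover have "finite (strict_lists lam a (Suc (Suc r)) x)"
    unfolding decomp using IH by auto
  ultimately show ?case by (simp add: I_def x_def)
qed

end

end

theorem proposition8:
  fixes lam :: "nat \<Rightarrow> real" and \<epsilon> :: real
  assumes mono: "\<And>m. 1 \<le> m \<Longrightarrow> lam (Suc m) \<le> lam m"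
    and pos: "\<And>m. 1 \<le> m \<Longrightarrow> lam m > 0"
    and lim: "lam \<longlonglongrightarrow> 0"
    and eps: "\<epsilon> > 0"
  shows "n_asy lam \<epsilon> 1 = n_ent lam \<epsilon>
    \<and> (\<forall>d\<ge>2. int (n_asy lam \<epsilon> d) = nest lam \<epsilon> (d - 1) 1 1)"
proof -
  have count: "int (n_asy lam \<epsilon> (Suc r)) = nest lam \<epsilon> r 1 1" for r
    using card_strict_lists_nest[OF mono pos lim eps, of 1 1 r]
    by (simp add: n_asy_strict_lists del: nest.simps)
  have "int (n_asy lam \<epsilon> 1) = int (n_ent lam \<epsilon>)"
    using count[of 0] by simp
  moreover have "int (n_asy lam \<epsilon> d) = nest lam \<epsilon> (d - 1) 1 1" if "d \<ge> 2" for d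
    using count[of "d - 1"] that by (simp add: Suc_diff_1 del: nest.simps)
  ultimately show ?thesis by simp
qed

end
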